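(* Let $\omega=e^{2\pi i/6}$, choose a sign $\pm$, and let $r\in\mathbb C\setminus\{0,\omega^{\pm1}\}$. Let $\Psi^\pm_r:\mathsf{PGL}_2(\mathbb Z)\to\mathsf{PGL}_2(\mathbb C)$ be the homomorphism with $$\Psi^\pm_r(T)=\begin{bmatrix}r&1\\0&1\end{bmatrix},\quad \Psi^\pm_r(S)=\begin{bmatrix}1&r^{-1}\\ -r+\omega^{\pm1}&-1\end{bmatrix},\quad \Psi^\pm_r(V)=\begin{bmatrix}1&\frac{1+r^{-1}}{r-\omega^{\pm1}}\\ 1-r&-1\end{bmatrix}.$$ Then there exists $M\in\mathsf{PGL}_2(\mathbb C)$ with $M\,\Psi^\pm_r(g)\,M^{-1}=\alpha(g)$ for all $g\in\mathsf{PGL}_2(\mathbb Z)$ (equivalently $M\Psi^\pm_r(U)M^{-1}=U$, $M\Psi^\pm_r(K)M^{-1}=K$, $M\Psi^\pm_r(V)M^{-1}=UV$) if and only if $r=-\varphi^2$ or $r=-\bar\varphi^2$.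
   Context: $\varphi=\frac{1+\sqrt5}{2}$, $\bar\varphi=\frac{1-\sqrt5}{2}$. An invertible matrix $\begin{bmatrix}a&b\\c&d\end{bmatrix}$ denotes the Möbius map $x\mapsto(ax+b)/(cx+d)$. In $\mathsf{PGL}_2(\mathbb Z)$: $T(x)=1+x$, $S(x)=-1/x$, $U(x)=1/x$, $V(x)=-x$, $K(x)=1-x$; $T,S,V$ generate $\mathsf{PGL}_2(\mathbb Z)$. Dyer's outer automorphism $\alpha$ of $\mathsf{PGL}_2(\mathbb Z)$ is the involutive automorphism with $\alpha(U)=U$, $\alpha(K)=K$, $\alpha(V)=UV$ (so $\alpha(T)=TU$, $\alpha(S)=V$). *)

theory Defs
  imports "HOL-Analysis.Analysis"
begin

text \<open>2x2 complex matrices; an invertible matrix represents the Moebius map x -> (ax+b)/(cx+d),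
  and the matrix product corresponds to composition of maps.\<close>

type_synonym cmat2 = "complex^2^2"

definition mat2 :: "complex \<Rightarrow> complex \<Rightarrow> complex \<Rightarrow> complex \<Rightarrow> cmat2" where
  "mat2 a b c d = (\<chi> i j. if i = 1 then (if j = 1 then a else b) else (if j = 1 then c else d))"

definition pgl_eq :: "cmat2 \<Rightarrow> cmat2 \<Rightarrow> bool" where
  "pgl_eq A B \<longleftrightarrow> (\<exists>c::complex. c \<noteq> 0 \<and> A = mat c ** B)"

definition golden :: real where "golden = (1 + sqrt 5) / 2"
definition golden_bar :: real where "golden_bar = (1 - sqrt 5) / 2"

definition omega6 :: complex where "omega6 = exp (2 * pi * \<i> / 6)"

definition matT :: cmat2 where "matT = mat2 1 1 0 1"
definition matS :: cmat2 where "matS = mat2 0 (-1) 1 0"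
definition matU :: cmat2 where "matU = mat2 0 1 1 0"
definition matV :: cmat2 where "matV = mat2 (-1) 0 0 1"
definition matK :: cmat2 where "matK = mat2 (-1) 1 0 1"

text \<open>The generators T, S, V of PGL_2(Z); they generate it even as a monoid
  (T^-1 = V T V, S and V are involutions), so every element is a word in them.\<close>
datatype gen = GT | GS | GV

definition eval_word :: "(gen \<Rightarrow> cmat2) \<Rightarrow> gen list \<Rightarrow> cmat2" where
  "eval_word f w = foldr (\<lambda>g acc. f g ** acc) w (mat 1)"

definition gen_mat :: "gen \<Rightarrow> cmat2" where
  "gen_mat g = (case g of GT \<Rightarrow> matT | GS \<Rightarrow> matS | GV \<Rightarrow> matV)"

definition alpha_gen :: "gen \<Rightarrow> cmat2" where
  "alpha_gen g = (case g of GT \<Rightarrow> matT ** matU | GS \<Rightarrow> matV | GV \<Rightarrow> matU ** matV)"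

definition Psi_gen :: "bool \<Rightarrow> complex \<Rightarrow> gen \<Rightarrow> cmat2" where
  "Psi_gen pm r g = (let w = (if pm then omega6 else inverse omega6) in
     (case g of
        GT \<Rightarrow> mat2 r 1 0 1
      | GS \<Rightarrow> mat2 1 (inverse r) (- r + w) (-1)
      | GV \<Rightarrow> mat2 1 ((1 + inverse r) / (r - w)) (1 - r) (-1)))"

end

theory Submission
  imports Defs
begin

text \<open>Conjugation up to a scalar preserves \<open>tr\<^sup>2 / det\<close>. For \<open>\<Psi>(T)\<close> this is \<open>(r+1)\<^sup>2 / r\<close>,
  for \<open>\<alpha>(T) = TU\<close> it is \<open>-1\<close>, so a conjugating matrix forces \<open>r\<^sup>2 + 3r + 1 = 0\<close>, whose roots
  are \<open>-\<phi>\<^sup>2\<close> and \<open>-(1 - \<phi>)\<^sup>2\<close>. Conversely, for these \<open>r\<close> an explicit matrix conjugates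
  \<open>\<Psi>(T), \<Psi>(S), \<Psi>(V)\<close> to scalar multiples of \<open>\<alpha>(T), \<alpha>(S), \<alpha>(V)\<close>, hence every word.\<close>

lemma cmat2_cases:
  obtains a b c d where "(A::cmat2) = mat2 a b c d"
proof (rule that)
  show "A = mat2 (A$1$1) (A$1$2) (A$2$1) (A$2$2)"
    unfolding mat2_def by (simp add: vec_eq_iff forall_2)
qed

lemma mat2_mult: "mat2 a b c d ** mat2 e f g h = mat2 (a*e+b*g) (a*f+b*h) (c*e+d*g) (c*f+d*h)"
  unfolding mat2_def matrix_matrix_mult_def by (simp add: vec_eq_iff forall_2 sum_2)

lemma mat2_eq_iff: "mat2 a b c d = mat2 a' b' c' d' \<longleftrightarrow> a = a' \<and> b = b' \<and> c = c' \<and> d = d'"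
  unfolding mat2_def by (simp add: vec_eq_iff forall_2)

lemma mat_eq_mat2: "(mat k :: cmat2) = mat2 k 0 0 k"
  unfolding mat2_def mat_def by (simp add: vec_eq_iff forall_2)

lemma det_mat2: "det (mat2 a b c d) = a*d - b*c"
  unfolding det_2 mat2_def by simp

lemma trace_mat2: "trace (mat2 a b c d) = a + d"
  unfolding trace_def mat2_def by (simp add: sum_2)

lemma mat_mult_commute: "mat k ** (A::cmat2) = A ** mat k"
  by (cases A rule: cmat2_cases) (simp add: mat_eq_mat2 mat2_mult mult.commute)

lemma mat_mult_mat: "mat k ** (mat l :: cmat2) = mat (k*l)"
  by (simp add: mat_eq_mat2 mat2_mult)

lemma det_mat: "det (mat k :: cmat2) = k^2"
  by (simp add: mat_eq_mat2 det_mat2 power2_eq_square)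

lemma trace_mat_mult: "trace (mat k ** (A::cmat2)) = k * trace A"
  by (cases A rule: cmat2_cases) (simp add: mat_eq_mat2 mat2_mult trace_mat2 algebra_simps)

lemma matrix_inv_invertible:
  fixes A :: "'a::semiring_1^'n^'n"
  assumes "invertible A"
  shows "A ** matrix_inv A = mat 1" and "matrix_inv A ** A = mat 1"
proof -
  have "\<exists>A'. A ** A' = mat 1 \<and> A' ** A = mat 1"
    using assms unfolding invertible_def by blast
  from someI_ex[OF this] show "A ** matrix_inv A = mat 1" and "matrix_inv A ** A = mat 1"
    unfolding matrix_inv_def by auto
qed

lemma invertible_conj_iff:
  fixes M :: "'a::semiring_1^'n^'n"
  assumes "invertible M"
  shows "M ** X ** matrix_inv M = Y \<longleftrightarrow> M ** X = Y ** M"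
proof
  assume "M ** X ** matrix_inv M = Y"
  then show "M ** X = Y ** M"
    using matrix_inv_invertible(2)[OF assms]
    by (metis matrix_mul_assoc matrix_mul_rid)
next
  assume "M ** X = Y ** M"
  then show "M ** X ** matrix_inv M = Y"
    using matrix_inv_invertible(1)[OF assms]
    by (metis matrix_mul_assoc matrix_mul_rid)
qed

lemma pgl_eq_conj_iff:
  assumes "det (M::cmat2) \<noteq> 0"
  shows "pgl_eq (M ** X ** matrix_inv M) Y \<longleftrightarrow> (\<exists>c. c \<noteq> 0 \<and> M ** X = mat c ** Y ** M)"
  using invertible_conj_iff assms invertible_det_nz unfolding pgl_eq_def by blast

lemma projectively_similar_trace_det:
  assumes "det (M::cmat2) \<noteq> 0" and conj: "M ** X = mat c ** Y ** M"
  shows "trace X ^ 2 * det Y = trace Y ^ 2 * det X"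
proof -
  have "invertible M"
    using assms(1) by (simp add: invertible_det_nz)
  note inv = matrix_inv_invertible[OF this]
  have conj_inv: "M ** X ** matrix_inv M = mat c ** Y"
    by (subst invertible_conj_iff[OF \<open>invertible M\<close>]) (rule conj)
  have "det M * det X = det M * (c^2 * det Y)"
    using arg_cong[OF conj, of det] by (simp add: det_mul det_mat mult_ac)
  then have det: "det X = c^2 * det Y"
    using assms(1) by simp
  have "trace X = trace (matrix_inv M ** (M ** X))"
    by (simp add: inv matrix_mul_assoc)
  also have "\<dots> = trace (M ** X ** matrix_inv M)"
    by (rule trace_mul_sym)
  also have "\<dots> = trace (mat c ** Y)"
    by (simp only: conj_inv)
  finally have trace: "trace X = c * trace Y"
    by (simp add: trace_mat_mult)
  show ?thesis
    unfolding det trace by (simp add: power2_eq_square)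
qed

lemma eval_word_Nil [simp]: "eval_word f [] = mat 1"
  by (simp add: eval_word_def)

lemma eval_word_Cons [simp]: "eval_word f (g # w) = f g ** eval_word f w"
  by (simp add: eval_word_def)

lemma eval_word_intertwine:
  assumes "\<And>g. \<exists>c. c \<noteq> 0 \<and> M ** f g = mat c ** a g ** M"
  shows "\<exists>c. c \<noteq> 0 \<and> M ** eval_word f w = mat c ** eval_word a w ** (M::cmat2)"
proof (induction w)
  case Nil
  show ?case by (intro exI[of _ 1]) simp
next
  case (Cons g w)
  obtain c where c: "c \<noteq> 0" "M ** f g = mat c ** a g ** M"
    using assms by blast
  obtain d where d: "d \<noteq> 0" "M ** eval_word f w = mat d ** eval_word a w ** M"
    using Cons by blast
  have "M ** eval_word f (g # w) = (M ** f g) ** eval_word f w"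
    by (simp add: matrix_mul_assoc)
  also have "\<dots> = mat c ** a g ** (M ** eval_word f w)"
    by (simp add: c(2) flip: matrix_mul_assoc)
  also have "\<dots> = mat c ** (a g ** mat d) ** eval_word a w ** M"
    by (simp add: d(2) matrix_mul_assoc)
  also have "\<dots> = mat c ** (mat d ** a g) ** eval_word a w ** M"
    by (simp only: mat_mult_commute[of d "a g"])
  also have "\<dots> = mat (c * d) ** eval_word a (g # w) ** M"
    by (simp add: matrix_mul_assoc flip: mat_mult_mat)
  finally show ?case
    using c(1) d(1) mult_eq_0_iff by blast
qed

definition omega_sign :: "bool \<Rightarrow> complex" where
  "omega_sign pm = (if pm then omega6 else inverse omega6)"

lemma omega6_eq_cis: "omega6 = cis (pi / 3)"
  unfolding omega6_def cis_conv_exp by (simp add: field_simps)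

lemma omega6_root: "omega6^2 - omega6 + 1 = 0"
  by (simp add: omega6_eq_cis complex_eq_iff cos_60 sin_60 power2_eq_square field_simps)

lemma inverse_omega6: "inverse omega6 = 1 - omega6"
  using omega6_root by (intro inverse_unique) (simp add: power2_eq_square algebra_simps)

lemma omega_sign_root: "omega_sign pm ^ 2 - omega_sign pm + 1 = 0"
  using omega6_root
  by (simp add: omega_sign_def inverse_omega6 power2_eq_square algebra_simps)

lemma Psi_gen_simps:
  "Psi_gen pm r GT = mat2 r 1 0 1"
  "Psi_gen pm r GS = mat2 1 (inverse r) (omega_sign pm - r) (-1)"
  "Psi_gen pm r GV = mat2 1 ((1 + inverse r) / (r - omega_sign pm)) (1 - r) (-1)"
  by (simp_all add: Psi_gen_def omega_sign_def Let_def)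

lemma alpha_gen_simps:
  "alpha_gen GT = mat2 1 1 1 0"
  "alpha_gen GS = mat2 (-1) 0 0 1"
  "alpha_gen GV = mat2 0 1 (-1) 0"
  by (simp_all add: alpha_gen_def matT_def matU_def matV_def mat2_mult)

lemma quadratic_if_Psi_conj_alpha:
  assumes "det M \<noteq> 0"
    and "\<forall>w. pgl_eq (M ** eval_word (Psi_gen pm r) w ** matrix_inv M) (eval_word alpha_gen w)"
  shows "r^2 + 3*r + 1 = 0"
proof -
  have "pgl_eq (M ** Psi_gen pm r GT ** matrix_inv M) (alpha_gen GT)"
    using assms(2)[rule_format, of "[GT]"] by simp
  then obtain c where "M ** Psi_gen pm r GT = mat c ** alpha_gen GT ** M"
    unfolding pgl_eq_conj_iff[OF assms(1)] by blast
  from projectively_similar_trace_det[OF assms(1) this]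
  have "(r + 1)^2 * (-1) = r"
    by (simp add: Psi_gen_simps alpha_gen_simps trace_mat2 det_mat2)
  moreover have "r^2 + 3*r + 1 = r - (r + 1)^2 * (-1)"
    by (simp add: power2_eq_square algebra_simps)
  ultimately show ?thesis
    by simp
qed

text \<open>With \<open>r = -1 - s\<close>, this matrix sends the fixed points \<open>\<infinity>, 1/(2+s)\<close> of \<open>\<Psi>(T)\<close> to the fixed points
  \<open>s, 1-s\<close> of \<open>TU\<close>, and the fixed points of \<open>\<Psi>(S)\<close> to the fixed points \<open>0, \<infinity>\<close> of \<open>V\<close>.\<close>

definition intertwiner :: "complex \<Rightarrow> complex \<Rightarrow> cmat2" where
  "intertwiner s W = mat2 (2 * s) (1 - s - 2 * W + s * W) 2 (s * W - W - 1)"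

lemma det_intertwiner_nz:
  assumes s: "s^2 = s + 1" and W: "W^2 - W + 1 = 0"
  shows "det (intertwiner s W) \<noteq> 0"
proof
  assume "det (intertwiner s W) = 0"
  then have "(3 - s) * W = 1"
    using s by (simp add: intertwiner_def det_mat2) algebra
  then have "(3 - s)^2 - (3 - s) + 1 = 0"
    using W by algebra
  then have "s = 2"
    using s by algebra
  then show False
    using s by simp
qed

lemma intertwiner_conj_generators:
  assumes s: "s^2 = s + 1" and W: "W^2 - W + 1 = 0" and k: "k * (-1 - s - W) = 1"
  shows "intertwiner s W ** mat2 (-1 - s) 1 0 1 = mat (-s) ** alpha_gen GT ** intertwiner s W"
    and "intertwiner s W ** mat2 1 (s - 2) (W + 1 + s) (-1)
      = mat ((1 - s) * (1 - W)) ** alpha_gen GS ** intertwiner s W"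
    and "intertwiner s W ** mat2 1 ((s - 1) * k) (2 + s) (-1)
      = mat ((2 * W - 2) * k) ** alpha_gen GV ** intertwiner s W"
  unfolding alpha_gen_simps intertwiner_def mat_eq_mat2 mat2_mult mat2_eq_iff
  using s W k by algebra+

lemma Psi_conj_alpha_if_quadratic:
  assumes r: "r^2 + 3*r + 1 = 0" and r_ne: "r \<noteq> omega_sign pm"
  shows "\<exists>M. det M \<noteq> 0 \<and>
    (\<forall>w. pgl_eq (M ** eval_word (Psi_gen pm r) w ** matrix_inv M) (eval_word alpha_gen w))"
proof -
  define W where "W = omega_sign pm"
  define s where "s = -1 - r"
  define k where "k = inverse (r - W)"
  define M where "M = intertwiner s W"
  have W: "W^2 - W + 1 = 0"
    using omega_sign_root by (simp add: W_def)
  have r_eq: "r = -1 - s"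
    by (simp add: s_def)
  have s: "s^2 = s + 1"
    using r by (simp add: r_eq power2_eq_square algebra_simps)
  have r_inv: "inverse r = s - 2"
    using s by (intro inverse_unique) (simp add: r_eq power2_eq_square algebra_simps)
  have k: "k * (-1 - s - W) = 1"
    using r_ne by (simp add: k_def W_def flip: r_eq)
  have Psi: "Psi_gen pm r GT = mat2 (-1 - s) 1 0 1"
    "Psi_gen pm r GS = mat2 1 (s - 2) (W + 1 + s) (-1)"
    "Psi_gen pm r GV = mat2 1 ((s - 1) * k) (2 + s) (-1)"
    by (simp_all add: Psi_gen_simps r_inv divide_inverse flip: W_def k_def)
      (simp_all add: r_eq algebra_simps)
  note generators = intertwiner_conj_generators[OF s W k, folded Psi M_def]
  have "- s \<noteq> 0" "(1 - s) * (1 - W) \<noteq> 0" "(2 * W - 2) * k \<noteq> 0"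
    using s W k by auto
  with generators have "\<exists>c. c \<noteq> 0 \<and> M ** Psi_gen pm r g = mat c ** alpha_gen g ** M" for g
    by (cases g) blast+
  moreover have "det M \<noteq> 0"
    unfolding M_def using s W by (rule det_intertwiner_nz)
  ultimately show ?thesis
    using eval_word_intertwine pgl_eq_conj_iff by blast
qed

lemma quadratic_golden_iff:
  fixes r :: complex
  shows "r^2 + 3*r + 1 = 0 \<longleftrightarrow> r = - of_real (golden ^ 2) \<or> r = - of_real (golden_bar ^ 2)"
proof -
  define a where "a = complex_of_real (golden^2)"
  define b where "b = complex_of_real (golden_bar^2)"
  have "golden^2 + golden_bar^2 = 3" and "golden^2 * golden_bar^2 = 1"
    by (simp_all add: golden_def golden_bar_def power2_eq_square field_simps)
  then have "a + b = 3" and "a * b = 1"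
    unfolding a_def b_def by (metis of_real_add of_real_numeral, metis of_real_mult of_real_1)
  then have "(r + a) * (r + b) = r^2 + 3*r + 1"
    by (simp add: power2_eq_square distrib_left distrib_right add.assoc
        flip: \<open>a + b = 3\<close> \<open>a * b = 1\<close>)
  then show ?thesis
    unfolding eq_neg_iff_add_eq_0 a_def[symmetric] b_def[symmetric] by (metis mult_eq_0_iff)
qed

theorem mainTheorem12:
  fixes pm :: bool and r :: complex
  assumes "r \<noteq> 0" and "r \<noteq> (if pm then omega6 else inverse omega6)"
  shows "(\<exists>M::cmat2. det M \<noteq> 0 \<and>
            (\<forall>w. pgl_eq (M ** eval_word (Psi_gen pm r) w ** matrix_inv M)
                         (eval_word alpha_gen w)))
         \<longleftrightarrow> (r = - complex_of_real (golden ^ 2) \<or> r = - complex_of_real (golden_bar ^ 2))"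
proof -
  have "r \<noteq> omega_sign pm"
    using assms(2) by (simp add: omega_sign_def)
  then show ?thesis
    using quadratic_if_Psi_conj_alpha Psi_conj_alpha_if_quadratic
    unfolding quadratic_golden_iff[symmetric] by blast
qed

end
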